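(* Let $a,b$ be nonnegative integers and let $G$ be a finite $(a,b)$-valent group. Then either $G$ has trivial soluble radical (i.e. $G$ has no nontrivial soluble normal subgroup), or $G$ has a minimal normal subgroup $N$ which is elementary abelian (isomorphic to $\mathbb{Z}_p^d$ for some prime $p$ and $d\ge1$) such that $G/N$ is a sub-$(a,b)$-valent group.
   Context: An involution is an element of order $2$. A subset $S$ of a group $G$ is a Cayley set of $G$ if $1\notin S$, $S$ is inverse-closed, and $S$ generates $G$. On pairs of nonnegative integers define $(a',b')\preccurlyeq(a,b)$ if and only if $b'\le b$ and $a'\le a+(b-b')/2$. A Cayley set is $(a,b)$-valent if it consists of exactly $a$ involutions and $b$ non-involutions, and sub-$(a,b)$-valent if it consists of $a'$ involutions and $b'$ non-involutions with $(a',b')\preccurlyeq(a,b)$. A group is $(a,b)$-valent (resp. sub-$(a,b)$-valent) if it has an $(a,b)$-valent (resp. sub-$(a,b)$-valent) Cayley set. The soluble radical of $G$ is its largest soluble normal subgroup. (The paper phrases the second alternative as "$G$ is a direct elementary abelian extension of a sub-$(a,b)$-valent group", where an extension of $Q$ by $N$ with $G/N\cong Q$ is direct if $N$ is a minimal normal subgroup of $G$ and elementary abelian if $N$ is elementary abelian.) *)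

theory Defs
  imports "HOL-Algebra.Algebra"
begin

definition involution :: "('a, 'b) monoid_scheme \<Rightarrow> 'a \<Rightarrow> bool" where
  "involution G x \<longleftrightarrow> x \<in> carrier G \<and> x \<noteq> \<one>\<^bsub>G\<^esub> \<and> x \<otimes>\<^bsub>G\<^esub> x = \<one>\<^bsub>G\<^esub>"

definition cayley_set :: "('a, 'b) monoid_scheme \<Rightarrow> 'a set \<Rightarrow> bool" where
  "cayley_set G S \<longleftrightarrow> S \<subseteq> carrier G \<and> \<one>\<^bsub>G\<^esub> \<notin> S
     \<and> (\<forall>x\<in>S. inv\<^bsub>G\<^esub> x \<in> S) \<and> generate G S = carrier G"

definition valent_set :: "('a, 'b) monoid_scheme \<Rightarrow> nat \<Rightarrow> nat \<Rightarrow> 'a set \<Rightarrow> bool" where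
  "valent_set G a b S \<longleftrightarrow> cayley_set G S \<and> finite S
     \<and> card {x \<in> S. involution G x} = a \<and> card {x \<in> S. \<not> involution G x} = b"

definition prec_pair :: "nat \<times> nat \<Rightarrow> nat \<times> nat \<Rightarrow> bool" where
  "prec_pair p q \<longleftrightarrow> snd p \<le> snd q
     \<and> real (fst p) \<le> real (fst q) + (real (snd q) - real (snd p)) / 2"

definition valent_group :: "('a, 'b) monoid_scheme \<Rightarrow> nat \<Rightarrow> nat \<Rightarrow> bool" where
  "valent_group G a b \<longleftrightarrow> (\<exists>S. valent_set G a b S)"

definition sub_valent_group :: "('a, 'b) monoid_scheme \<Rightarrow> nat \<Rightarrow> nat \<Rightarrow> bool" where
  "sub_valent_group G a b \<longleftrightarrow>
     (\<exists>S a' b'. valent_set G a' b' S \<and> prec_pair (a', b') (a, b))"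

definition trivial_soluble_radical :: "('a, 'b) monoid_scheme \<Rightarrow> bool" where
  "trivial_soluble_radical G \<longleftrightarrow>
     (\<forall>N. N \<lhd> G \<and> solvable (G\<lparr>carrier := N\<rparr>) \<longrightarrow> N = {\<one>\<^bsub>G\<^esub>})"

definition minimal_normal :: "('a, 'b) monoid_scheme \<Rightarrow> 'a set \<Rightarrow> bool" where
  "minimal_normal G N \<longleftrightarrow> N \<lhd> G \<and> N \<noteq> {\<one>\<^bsub>G\<^esub>}
     \<and> (\<forall>M. M \<lhd> G \<and> M \<subseteq> N \<longrightarrow> M = {\<one>\<^bsub>G\<^esub>} \<or> M = N)"

text \<open>Elementary abelian: abelian of prime exponent p (for finite nontrivial N this is
  exactly N isomorphic to Z_p^d with d at least 1).\<close>
definition elementary_abelian :: "('a, 'b) monoid_scheme \<Rightarrow> 'a set \<Rightarrow> bool" where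
  "elementary_abelian G N \<longleftrightarrow> comm_group (G\<lparr>carrier := N\<rparr>)
     \<and> (\<exists>p::nat. Factorial_Ring.prime p \<and> (\<forall>x\<in>N. x [^]\<^bsub>G\<^esub> p = \<one>\<^bsub>G\<^esub>))"

end

theory Submission
  imports Defs
begin

text \<open>Let \<open>N\<close> be a minimal normal subgroup of \<open>G\<close> inside a nontrivial soluble normal
  subgroup \<open>R\<close>. The derived subgroup of \<open>N\<close> is normal in \<open>G\<close> and cannot equal \<open>N\<close>, since
  the derived series of \<open>R\<close> reaches \<open>1\<close>; so \<open>N\<close> is abelian. For a prime \<open>p\<close> dividing the
  order of some element of \<open>N\<close>, the elements of \<open>N\<close> of order dividing \<open>p\<close> form a nontrivial
  normal subgroup of \<open>G\<close>, hence all of \<open>N\<close>.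

  If \<open>S\<close> is an \<open>(a,b)\<close>-valent Cayley set, its image \<open>T\<close> in \<open>G/N\<close> without the identity is
  a Cayley set. Every non-involution of \<open>T\<close> has a non-involution preimage in \<open>S\<close>, and each
  of the \<open>c\<close> involutions of \<open>T\<close> that are not images of involutions of \<open>S\<close> has the two
  distinct non-involution preimages \<open>x\<close> and \<open>x\<inverse>\<close>. Counting fibres, \<open>T\<close> has \<open>b' \<le> b - 2c\<close>
  non-involutions and \<open>a' \<le> a + c\<close> involutions, so \<open>(a',b') \<preccurlyeq> (a,b)\<close>.\<close>

lemma sum_card_fibres_le:
  assumes "finite B"
  shows "(\<Sum>y\<in>Y. card {x \<in> B. f x = y}) \<le> card B"
proof (cases "finite Y")
  case True
  have "(\<Sum>y\<in>Y. card {x \<in> B. f x = y}) = card (\<Union>y\<in>Y. {x \<in> B. f x = y})"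
    using True assms by (intro card_UN_disjoint[symmetric]) auto
  also have "\<dots> \<le> card B"
    using assms by (intro card_mono) auto
  finally show ?thesis .
qed simp

lemma card_le_by_fibres:
  assumes "finite B" and "finite Y\<^sub>1" and "finite Y\<^sub>2" and "Y\<^sub>1 \<inter> Y\<^sub>2 = {}"
    and "\<And>y. y \<in> Y\<^sub>1 \<Longrightarrow> 1 \<le> card {x \<in> B. f x = y}"
    and "\<And>y. y \<in> Y\<^sub>2 \<Longrightarrow> 2 \<le> card {x \<in> B. f x = y}"
  shows "card Y\<^sub>1 + 2 * card Y\<^sub>2 \<le> card B"
proof -
  have "card Y\<^sub>1 + 2 * card Y\<^sub>2 = (\<Sum>y\<in>Y\<^sub>1. 1) + (\<Sum>y\<in>Y\<^sub>2. 2)"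
    by simp
  also have "\<dots> \<le> (\<Sum>y\<in>Y\<^sub>1. card {x \<in> B. f x = y}) + (\<Sum>y\<in>Y\<^sub>2. card {x \<in> B. f x = y})"
    using assms(5,6) by (intro add_mono sum_mono) auto
  also have "\<dots> = (\<Sum>y\<in>Y\<^sub>1 \<union> Y\<^sub>2. card {x \<in> B. f x = y})"
    using assms(2-4) by (intro sum.union_disjoint[symmetric])
  also have "\<dots> \<le> card B"
    using assms(1) by (rule sum_card_fibres_le)
  finally show ?thesis .
qed

lemma prec_pairI:
  assumes "b' + 2 * c \<le> b" and "a' \<le> a + c"
  shows "prec_pair (a', b') (a, b)"
proof -
  have "real b' + 2 * real c \<le> real b" and "real a' \<le> real a + real c"
    using assms by (metis of_nat_le_iff of_nat_add of_nat_mult of_nat_numeral)+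
  then have "real a' \<le> real a + (real b - real b') / 2"
    by (simp add: field_simps)
  then show ?thesis
    using assms(1) unfolding prec_pair_def by auto
qed

lemma (in group) involution_inv_iff:
  assumes "x \<in> carrier G"
  shows "involution G (inv x) \<longleftrightarrow> involution G x"
proof -
  have "inv x \<otimes> inv x = inv (x \<otimes> x)"
    using assms by (simp add: inv_mult_group)
  then show ?thesis
    using assms unfolding involution_def by simp
qed

lemma (in group) inv_neq_self:
  assumes "x \<in> carrier G" and "x \<noteq> \<one>" and "\<not> involution G x"
  shows "inv x \<noteq> x"
proof
  assume "inv x = x"
  then have "x \<otimes> x = \<one>"
    using r_inv[OF assms(1)] by simp
  then show False
    using assms unfolding involution_def by blast
qed

lemma (in group) generate_Diff_one:
  assumes "K \<subseteq> carrier G"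
  shows "generate G (K - {\<one>}) = generate G K"
proof
  show "generate G (K - {\<one>}) \<subseteq> generate G K"
    by (rule mono_generate) blast
  have "K \<subseteq> generate G (K - {\<one>})"
  proof
    fix x assume "x \<in> K"
    then show "x \<in> generate G (K - {\<one>})"
      by (cases "x = \<one>") (auto intro: generate.one generate.incl)
  qed
  moreover have "subgroup (generate G (K - {\<one>})) G"
    using assms by (intro generate_is_subgroup) auto
  ultimately show "generate G K \<subseteq> generate G (K - {\<one>})"
    by (rule generate_subgroup_incl)
qed

lemma (in group_hom) involution_image:
  assumes "involution G x" and "h x \<noteq> \<one>\<^bsub>H\<^esub>"
  shows "involution H (h x)"
proof -
  have x: "x \<in> carrier G" "x \<otimes> x = \<one>"
    using assms(1) unfolding involution_def by auto
  have "h x \<otimes>\<^bsub>H\<^esub> h x = \<one>\<^bsub>H\<^esub>"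
    using hom_mult[OF x(1) x(1)] x(2) by simp
  then show ?thesis
    using assms(2) x(1) unfolding involution_def by simp
qed

lemma (in group_hom) cayley_set_image:
  assumes surj: "h ` carrier G = carrier H" and S: "cayley_set G S"
  shows "cayley_set H (h ` S - {\<one>\<^bsub>H\<^esub>})"
proof -
  have S_carrier: "S \<subseteq> carrier G" and inv_S: "\<forall>x\<in>S. inv x \<in> S"
    and gen_S: "generate G S = carrier G"
    using S unfolding cayley_set_def by auto
  have "inv\<^bsub>H\<^esub> y \<in> h ` S - {\<one>\<^bsub>H\<^esub>}" if "y \<in> h ` S - {\<one>\<^bsub>H\<^esub>}" for y
    using that S_carrier inv_S by force
  moreover have "generate H (h ` S - {\<one>\<^bsub>H\<^esub>}) = generate H (h ` S)"
    using S_carrier by (intro H.generate_Diff_one) auto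
  moreover have "generate H (h ` S) = carrier H"
    using generate_img[OF S_carrier] gen_S surj by simp
  ultimately show ?thesis
    using S_carrier unfolding cayley_set_def by auto
qed

lemma (in group_hom) card_image_non_involutions_le:
  assumes S: "cayley_set G S" and fin_S: "finite S"
  defines "T \<equiv> h ` S - {\<one>\<^bsub>H\<^esub>}"
  shows "card {y \<in> T. \<not> involution H y}
      + 2 * card ({y \<in> T. involution H y} - h ` {x \<in> S. involution G x})
      \<le> card {x \<in> S. \<not> involution G x}"
proof (rule card_le_by_fibres)
  have S_carrier: "S \<subseteq> carrier G" and one_S: "\<one> \<notin> S" and inv_S: "\<forall>x\<in>S. inv x \<in> S"
    using S unfolding cayley_set_def by auto
  define B where "B = {x \<in> S. \<not> involution G x}"
  show "finite B" "finite {y \<in> T. \<not> involution H y}"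
    "finite ({y \<in> T. involution H y} - h ` {x \<in> S. involution G x})"
    using fin_S unfolding B_def T_def by auto
  show "{y \<in> T. \<not> involution H y} \<inter> ({y \<in> T. involution H y} - h ` {x \<in> S. involution G x}) = {}"
    by blast
  show "1 \<le> card {x \<in> B. h x = y}" if y: "y \<in> {y \<in> T. \<not> involution H y}" for y
  proof -
    obtain x where "x \<in> S" "h x = y" "y \<noteq> \<one>\<^bsub>H\<^esub>" "\<not> involution H y"
      using y unfolding T_def by blast
    then have "{x \<in> B. h x = y} \<noteq> {}"
      using involution_image unfolding B_def by blast
    then show ?thesis
      using \<open>finite B\<close> by (simp add: Suc_le_eq card_gt_0_iff)
  qed
  show "2 \<le> card {x \<in> B. h x = y}"
    if y: "y \<in> {y \<in> T. involution H y} - h ` {x \<in> S. involution G x}" for y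
  proof -
    obtain x where x: "x \<in> S" "h x = y" "involution H y"
      using y unfolding T_def by auto
    have x_carrier: "x \<in> carrier G" and x_B: "x \<in> B"
      using x y S_carrier unfolding B_def by auto
    have "inv x \<in> B"
      using x_B inv_S G.involution_inv_iff[OF x_carrier] unfolding B_def by auto
    moreover have "h (inv x) = y"
      using x x_carrier H.inv_equality unfolding involution_def by auto
    moreover have "inv x \<noteq> x"
      using x_B x_carrier one_S unfolding B_def by (intro G.inv_neq_self) auto
    ultimately have "{x, inv x} \<subseteq> {x \<in> B. h x = y}"
      using x x_B by auto
    then have "card {x, inv x} \<le> card {x \<in> B. h x = y}"
      using \<open>finite B\<close> by (intro card_mono) auto
    then show ?thesis
      using \<open>inv x \<noteq> x\<close> by simp
  qed
qed

lemma (in group_hom) sub_valent_group_image: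
  assumes surj: "h ` carrier G = carrier H" and S: "valent_set G a b S"
  shows "sub_valent_group H a b"
proof -
  have S_cayley: "cayley_set G S" and fin_S: "finite S"
    and card_A: "card {x \<in> S. involution G x} = a"
    and card_B: "card {x \<in> S. \<not> involution G x} = b"
    using S unfolding valent_set_def by auto
  define A where "A = {x \<in> S. involution G x}"
  define T where "T = h ` S - {\<one>\<^bsub>H\<^esub>}"
  define T\<^sub>1 where "T\<^sub>1 = {y \<in> T. involution H y}"
  define T\<^sub>2 where "T\<^sub>2 = {y \<in> T. \<not> involution H y}"
  have "card T\<^sub>2 + 2 * card (T\<^sub>1 - h ` A) \<le> b"
    using card_image_non_involutions_le[OF S_cayley fin_S] card_B
    unfolding A_def T_def T\<^sub>1_def T\<^sub>2_def by simp
  moreover have "card T\<^sub>1 \<le> a + card (T\<^sub>1 - h ` A)"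
  proof -
    have "card T\<^sub>1 \<le> card (h ` A \<union> (T\<^sub>1 - h ` A))"
      using fin_S unfolding A_def T\<^sub>1_def T_def by (intro card_mono) auto
    also have "\<dots> \<le> card (h ` A) + card (T\<^sub>1 - h ` A)"
      by (rule card_Un_le)
    also have "\<dots> \<le> a + card (T\<^sub>1 - h ` A)"
      using card_image_le[of A h] fin_S card_A unfolding A_def by simp
    finally show ?thesis .
  qed
  moreover have "valent_set H (card T\<^sub>1) (card T\<^sub>2) T"
    using cayley_set_image[OF surj S_cayley] fin_S
    unfolding valent_set_def T_def T\<^sub>1_def T\<^sub>2_def by auto
  ultimately show ?thesis
    unfolding sub_valent_group_def using prec_pairI by blast
qed

lemma sub_valent_group_FactGroup:
  fixes G (structure)
  assumes "group G" and "N \<lhd> G" and "valent_group G a b"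
  shows "sub_valent_group (G Mod N) a b"
proof -
  interpret N: normal N G by fact
  interpret quot: group_hom G "G Mod N" "\<lambda>x. N #> x"
    using assms(1) N.factorgroup_is_group N.r_coset_hom_Mod by (auto simp: group_hom_def group_hom_axioms_def)
  show ?thesis
    using assms(3) quot.sub_valent_group_image[OF carrier_FactGroup[symmetric]]
    unfolding valent_group_def by blast
qed

lemma (in group) solvable_subgroup_imp_trivial_derived_seq:
  assumes "subgroup M G" and "solvable (G\<lparr>carrier := M\<rparr>)"
  shows "\<exists>n. (derived G ^^ n) M = {\<one>}"
proof -
  interpret incl: group_hom "G\<lparr>carrier := M\<rparr>" G id
    by (rule canonical_inj_is_hom[OF assms(1)])
  have "solvable_seq G M"
    using incl.solvable_imp_solvable_img assms(2) unfolding solvable_def by simp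
  then show ?thesis
    by (rule solvable_imp_trivial_derived_seq)
qed

lemma (in group) minimal_normal_in_solvable_derived_trivial:
  assumes N: "minimal_normal G N" and M: "subgroup M G" "N \<subseteq> M"
    and solvable: "solvable (G\<lparr>carrier := M\<rparr>)"
  shows "derived G N = {\<one>}"
proof -
  have N_normal: "N \<lhd> G" and "N \<noteq> {\<one>}"
    and N_min: "\<And>K. K \<lhd> G \<Longrightarrow> K \<subseteq> N \<Longrightarrow> K = {\<one>} \<or> K = N"
    using N unfolding minimal_normal_def by auto
  have N_subgroup: "subgroup N G"
    using N_normal by (rule normal_imp_subgroup)
  have "derived G N \<noteq> N"
  proof
    assume perfect: "derived G N = N"
    obtain n where "(derived G ^^ n) M = {\<one>}"
      using solvable_subgroup_imp_trivial_derived_seq[OF M(1) solvable] by blast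
    moreover have "(derived G ^^ n) N = N"
      using perfect by (induction n) auto
    ultimately have "N \<subseteq> {\<one>}"
      using mono_exp_of_derived[OF M(2), of n] by simp
    then show False
      using \<open>N \<noteq> {\<one>}\<close> subgroup.one_closed[OF N_subgroup] by blast
  qed
  moreover have "derived G N \<lhd> G" and "derived G N \<subseteq> N"
    using derived_is_normal[OF N_normal] derived_incl[OF order_refl N_subgroup] by auto
  ultimately show ?thesis
    using N_min by blast
qed

lemma (in group) commute_if_commutator_eq_one:
  assumes "x \<in> carrier G" "y \<in> carrier G" and "x \<otimes> y \<otimes> inv x \<otimes> inv y = \<one>"
  shows "x \<otimes> y = y \<otimes> x"
proof -
  have "x \<otimes> y = x \<otimes> y \<otimes> inv x \<otimes> inv y \<otimes> y \<otimes> x"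
    using assms(1,2) by (simp add: m_assoc)
  also have "\<dots> = y \<otimes> x"
    using assms by simp
  finally show ?thesis .
qed

lemma (in group) derived_trivial_imp_comm_group:
  assumes "subgroup N G" and "derived G N = {\<one>}"
  shows "comm_group (G\<lparr>carrier := N\<rparr>)"
proof -
  have "x \<otimes> y = y \<otimes> x" if "x \<in> N" "y \<in> N" for x y
  proof (rule commute_if_commutator_eq_one)
    show "x \<in> carrier G" "y \<in> carrier G"
      using that subgroup.subset[OF assms(1)] by auto
    have "x \<otimes> y \<otimes> inv x \<otimes> inv y \<in> derived G N"
      unfolding derived_def using that by (intro generate.incl) blast
    then show "x \<otimes> y \<otimes> inv x \<otimes> inv y = \<one>"
      using assms(2) by simp
  qed
  then show ?thesis
    using group.group_comm_groupI[OF subgroup_imp_group[OF assms(1)]] by simp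
qed

lemma (in group) conjugation_hom:
  assumes "g \<in> carrier G"
  shows "(\<lambda>x. g \<otimes> x \<otimes> inv g) \<in> hom G G"
proof -
  have cancel: "inv g \<otimes> (g \<otimes> z) = z" if "z \<in> carrier G" for z
    using assms that by (simp add: m_assoc[symmetric])
  show ?thesis
    using assms by (intro homI) (auto simp: m_assoc cancel)
qed

lemma (in group) pow_eq_one_elements_normal:
  assumes N: "N \<lhd> G" and abelian: "comm_group (G\<lparr>carrier := N\<rparr>)"
  shows "{x \<in> N. x [^] (p::nat) = \<one>} \<lhd> G"
proof -
  interpret N: normal N G by (rule N)
  have comm: "x \<otimes> y = y \<otimes> x" if "x \<in> N" "y \<in> N" for x y
    using comm_groupE(4)[OF abelian] that by simp
  have "subgroup {x \<in> N. x [^] p = \<one>} G"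
  proof
    fix x y assume "x \<in> {x \<in> N. x [^] p = \<one>}" "y \<in> {x \<in> N. x [^] p = \<one>}"
    then show "x \<otimes> y \<in> {x \<in> N. x [^] p = \<one>}"
      using pow_mult_distrib[OF comm] N.subset by auto
  qed (use N.subset nat_pow_inv in auto)
  then show ?thesis
  proof (rule normal_invI)
    fix g x assume "g \<in> carrier G" "x \<in> {x \<in> N. x [^] p = \<one>}"
    moreover have "(g \<otimes> x \<otimes> inv g) [^] p = g \<otimes> x [^] p \<otimes> inv g" if "g \<in> carrier G" "x \<in> carrier G"
      using hom_nat_pow[OF conjugation_hom[OF that(1)] that(2) is_group is_group] by simp
    ultimately show "g \<otimes> x \<otimes> inv g \<in> {x \<in> N. x [^] p = \<one>}"
      using N.inv_op_closed2 N.subset by auto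
  qed
qed

lemma (in group) obtain_pow_with_prime_ord:
  assumes "finite (carrier G)" "x \<in> carrier G" "x \<noteq> \<one>"
  obtains p k where "Factorial_Ring.prime p" "ord (x [^] (k::nat)) = p"
proof -
  have "ord x \<noteq> 1"
    using ord_eq_1 assms(2,3) by simp
  then obtain p where p: "Factorial_Ring.prime p" "p dvd ord x"
    using prime_factor_nat by blast
  have "ord x \<noteq> 0"
    using ord_ge_1[OF assms(1,2)] by simp
  moreover obtain q where q: "ord x = p * q"
    using p(2) by (auto elim: dvdE)
  ultimately have "ord (x [^] q) = p"
    using ord_pow[OF assms(2), of q] by simp
  with p(1) show thesis
    by (rule that)
qed

lemma (in group) abelian_minimal_normal_elementary_abelian:
  assumes fin: "finite (carrier G)" and N: "minimal_normal G N"
    and abelian: "comm_group (G\<lparr>carrier := N\<rparr>)"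
  shows "elementary_abelian G N"
proof -
  have N_normal: "N \<lhd> G" and "N \<noteq> {\<one>}"
    and N_min: "\<And>K. K \<lhd> G \<Longrightarrow> K \<subseteq> N \<Longrightarrow> K = {\<one>} \<or> K = N"
    using N unfolding minimal_normal_def by auto
  interpret N: normal N G by (rule N_normal)
  obtain x where x: "x \<in> N" "x \<noteq> \<one>"
    using \<open>N \<noteq> {\<one>}\<close> N.one_closed by blast
  obtain p k where p: "Factorial_Ring.prime p" "ord (x [^] (k::nat)) = p"
    using obtain_pow_with_prime_ord[OF fin _ x(2)] x(1) N.subset by blast
  define y where "y = x [^] k"
  have "y \<in> N"
    unfolding y_def using x(1) by (induction k) auto
  moreover have "y [^] p = \<one>" and "y \<noteq> \<one>"
    using p N.subset x(1) ord_eq_1[of y] prime_gt_1_nat[OF p(1)] unfolding y_def by auto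
  ultimately have "{z \<in> N. z [^] p = \<one>} \<noteq> {\<one>}"
    by blast
  then have "{z \<in> N. z [^] p = \<one>} = N"
    using N_min[OF pow_eq_one_elements_normal[OF N_normal abelian]] by blast
  then show ?thesis
    unfolding elementary_abelian_def using abelian p(1) by blast
qed

lemma (in group) obtain_minimal_normal_subset:
  assumes fin: "finite (carrier G)" and M: "M \<lhd> G" "M \<noteq> {\<one>}"
  obtains N where "minimal_normal G N" "N \<subseteq> M"
proof -
  define P where "P K \<longleftrightarrow> K \<lhd> G \<and> K \<subseteq> M \<and> K \<noteq> {\<one>}" for K
  have "P M"
    using M unfolding P_def by auto
  then obtain N where N: "P N" and N_least: "\<And>K. P K \<Longrightarrow> card N \<le> card K"
    using ex_has_least_nat[of P M card] by blast
  have "subgroup N G"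
    using N unfolding P_def by (simp add: normal_imp_subgroup)
  then have "finite N"
    using fin by (meson subgroup.subset finite_subset)
  have "minimal_normal G N"
    unfolding minimal_normal_def
  proof (intro conjI allI impI)
    show "N \<lhd> G" "N \<noteq> {\<one>}"
      using N unfolding P_def by auto
    fix K assume K: "K \<lhd> G \<and> K \<subseteq> N"
    show "K = {\<one>} \<or> K = N"
    proof (cases "K = {\<one>}")
      case False
      then have "card N \<le> card K"
        using K N by (intro N_least) (auto simp: P_def)
      then show ?thesis
        using card_seteq[OF \<open>finite N\<close>] K by blast
    qed simp
  qed
  then show thesis
    using that N unfolding P_def by blast
qed

theorem lemma3p2:
  fixes G (structure) and a b :: nat
  assumes "group G" and "finite (carrier G)" and "valent_group G a b"
  shows "trivial_soluble_radical G \<or>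
    (\<exists>N. minimal_normal G N \<and> elementary_abelian G N \<and> sub_valent_group (G Mod N) a b)"
proof (cases "trivial_soluble_radical G")
  case False
  interpret group G by fact
  obtain M where M: "M \<lhd> G" "solvable (G\<lparr>carrier := M\<rparr>)" "M \<noteq> {\<one>}"
    using False unfolding trivial_soluble_radical_def by blast
  obtain N where N: "minimal_normal G N" "N \<subseteq> M"
    using obtain_minimal_normal_subset[OF assms(2) M(1,3)] by blast
  have N_normal: "N \<lhd> G"
    using N(1) unfolding minimal_normal_def by blast
  have "derived G N = {\<one>}"
    using minimal_normal_in_solvable_derived_trivial[OF N(1) normal_imp_subgroup[OF M(1)] N(2) M(2)] .
  then have "comm_group (G\<lparr>carrier := N\<rparr>)"
    using derived_trivial_imp_comm_group normal_imp_subgroup[OF N_normal] by blast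
  then have "elementary_abelian G N"
    using abelian_minimal_normal_elementary_abelian[OF assms(2) N(1)] by blast
  moreover have "sub_valent_group (G Mod N) a b"
    using sub_valent_group_FactGroup[OF assms(1) N_normal assms(3)] .
  ultimately show ?thesis
    using N(1) by blast
qed simp

end
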